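(* Let $d\ge2$, $s\ge 1$, $\{r_n\}\subset(0,+\infty)$ with $r_n\to 0^+$, and let $\{E_n\}$ be measurable sets of finite measure such that $\chi_{E_n}\to\chi_E$ in $L^1(\mathbb{R}^d)$ for some measurable set $E$ of finite measure. If $\limsup_{n\to\infty}\frac{\tilde J^s_{r_n}(E_n)}{\sigma^s(r_n)}\le M$ for some $M<+\infty$, then $E$ has finite perimeter.
   Context: $k^s_r(t)=r^{-d-s}$ for $0\le t\le r$ and $k^s_r(t)=t^{-d-s}$ for $t>r$; $\tilde J_r^s(E):=\int_E\int_{\mathbb{R}^d\setminus E}k^s_r(|x-y|)\,dy\,dx$. $\sigma^s(r):=|\log r|$ if $s=1$ and $\sigma^s(r):=\frac{d+s}{d+1}\frac{r^{1-s}}{s-1}$ if $s>1$. *)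

theory Defs
  imports "HOL-Analysis.Analysis"
begin

definition kernel_k :: "nat \<Rightarrow> real \<Rightarrow> real \<Rightarrow> real \<Rightarrow> real" where
  "kernel_k d s r t = (if t \<le> r then r powr (-(real d + s)) else t powr (-(real d + s)))"

definition Jtilde :: "real \<Rightarrow> real \<Rightarrow> ('a::euclidean_space) set \<Rightarrow> ennreal" where
  "Jtilde s r E = (\<integral>\<^sup>+ x. (\<integral>\<^sup>+ y. ennreal (kernel_k DIM('a) s r (dist x y))
       * indicator (UNIV - E) y \<partial>lebesgue) * indicator E x \<partial>lebesgue)"

definition sigma_s :: "nat \<Rightarrow> real \<Rightarrow> real \<Rightarrow> real" where
  "sigma_s d s r = (if s = 1 then \<bar>ln r\<bar>
                    else (real d + s) / (real d + 1) * r powr (1 - s) / (s - 1))"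

definition test_fields :: "('a::euclidean_space \<Rightarrow> 'a) set" where
  "test_fields = {\<phi>. (\<exists>D :: 'a \<Rightarrow> ('a \<Rightarrow>\<^sub>L 'a). continuous_on UNIV D \<and>
                        (\<forall>x. (\<phi> has_derivative blinfun_apply (D x)) (at x)))
                    \<and> compact (closure {x. \<phi> x \<noteq> 0})
                    \<and> (\<forall>x. norm (\<phi> x) \<le> 1)}"

definition divergence :: "('a::euclidean_space \<Rightarrow> 'a) \<Rightarrow> 'a \<Rightarrow> real" where
  "divergence \<phi> x = (\<Sum>b\<in>Basis. frechet_derivative \<phi> (at x) b \<bullet> b)"

definition perimeter :: "('a::euclidean_space) set \<Rightarrow> ereal" where
  "perimeter E = (SUP \<phi>\<in>test_fields. ereal (LINT x:E|lebesgue. divergence \<phi> x))"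

definition finite_perimeter :: "('a::euclidean_space) set \<Rightarrow> bool" where
  "finite_perimeter E \<longleftrightarrow> perimeter E < \<infinity>"

end

theory Submission
  imports Defs
begin

text \<open>
  For a set \<open>F\<close> let \<open>g\<^sub>F(h) = |{x \<in> F. x + h \<notin> F}|\<close>. Fubini gives
  \<open>J\<^sub>r(F) = \<integral> k\<^sub>r(|h|) g\<^sub>F(h) dh\<close>, and \<open>g\<^sub>F\<close> is subadditive in \<open>h\<close>. Fix \<open>t > 0\<close>, a unit vector
  \<open>e\<close> and the scales \<open>\<rho>\<^sub>j = t / (4 \<cdot> 8\<^sup>j)\<close> with \<open>r \<le> 7 \<rho>\<^sub>j\<close>; there are about \<open>log\<^sub>8 (t / r)\<close>
  of them. Subadditivity gives \<open>g\<^sub>F(t e) \<le> 8\<^sup>j g\<^sub>F(4 \<rho>\<^sub>j e)\<close>, and averaging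
  \<open>g\<^sub>F(y) \<le> g\<^sub>F(h) + g\<^sub>F(y - h)\<close> over a ball bounds \<open>|B\<^sub>\<rho>\<^sub>j| g\<^sub>F(4 \<rho>\<^sub>j e)\<close> by the integral of \<open>g\<^sub>F\<close>
  over two balls inside the annulus \<open>\<rho>\<^sub>j < |h| < 7 \<rho>\<^sub>j\<close>, where \<open>k\<^sub>r \<ge> (7 \<rho>\<^sub>j)\<^sup>-\<^sup>d\<^sup>-\<^sup>s\<close>. The
  annuli are disjoint, so summing over \<open>j\<close> yields \<open>\<sigma>(r) g\<^sub>F(t e) \<le> C' t J\<^sub>r(F)\<close> for small \<open>r\<close>.
  Hence \<open>g\<^sub>E\<^sub>n(h) \<le> C |h|\<close> eventually, and in the \<open>L\<^sup>1\<close> limit \<open>g\<^sub>E(h) \<le> C |h|\<close>. Testing the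
  definition of the perimeter with difference quotients of \<open>\<phi>\<close> then gives
  \<open>\<integral>\<^sub>E div \<phi> \<le> 2 d C\<close>.
\<close>

lemma nn_integral_lborel_translate:
  fixes f :: "'a::euclidean_space \<Rightarrow> ennreal"
  assumes [measurable]: "f \<in> borel_measurable borel"
  shows "(\<integral>\<^sup>+x. f (x + c) \<partial>lborel) = (\<integral>\<^sup>+x. f x \<partial>lborel)"
proof -
  have "(\<integral>\<^sup>+x. f x \<partial>lborel) = (\<integral>\<^sup>+x. f x \<partial>(distr lborel borel ((+) c)))"
    by (simp add: lborel_distr_plus)
  also have "\<dots> = (\<integral>\<^sup>+x. f (c + x) \<partial>lborel)"
    by (subst nn_integral_distr) auto
  finally show ?thesis by (simp add: add.commute)
qed

lemma nn_integral_lborel_reflect: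
  fixes f :: "'a::euclidean_space \<Rightarrow> ennreal"
  assumes [measurable]: "f \<in> borel_measurable borel"
  shows "(\<integral>\<^sup>+x. f (c - x) \<partial>lborel) = (\<integral>\<^sup>+x. f x \<partial>lborel)"
proof -
  have "(\<integral>\<^sup>+x. f x \<partial>lborel)
      = (\<integral>\<^sup>+x. f x \<partial>(density (distr lborel borel (\<lambda>x. c + (-1) *\<^sub>R x)) (\<lambda>_. \<bar>-1::real\<bar> ^ DIM('a))))"
    by (subst lborel_affine[of "-1" c, symmetric]) auto
  also have "\<dots> = (\<integral>\<^sup>+x. f (c - x) \<partial>lborel)"
    by (simp add: density_1 nn_integral_distr)
  finally show ?thesis by simp
qed

lemma integral_lborel_translate:
  fixes f :: "'a::euclidean_space \<Rightarrow> real"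
  assumes [measurable]: "f \<in> borel_measurable borel"
  shows "(\<integral>x. f (x + c) \<partial>lborel) = (\<integral>x. f x \<partial>lborel)"
proof -
  have "(\<integral>x. f x \<partial>lborel) = (\<integral>x. f x \<partial>(distr lborel borel ((+) c)))"
    by (simp add: lborel_distr_plus)
  also have "\<dots> = (\<integral>x. f (c + x) \<partial>lborel)"
    by (subst integral_distr) auto
  finally show ?thesis by (simp add: add.commute)
qed

lemma integrable_lborel_translate:
  fixes f :: "'a::euclidean_space \<Rightarrow> real"
  assumes "integrable lborel f" and [measurable]: "f \<in> borel_measurable borel"
  shows "integrable lborel (\<lambda>x. f (x + c))"
proof -
  have "integrable (distr lborel borel ((+) c)) f"
    using assms(1) by (simp add: lborel_distr_plus)
  then have "integrable lborel (\<lambda>x. f (c + x))"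
    by (subst (asm) integrable_distr_eq) auto
  then show ?thesis by (simp add: add.commute)
qed

section \<open>The shift defect of a set\<close>

definition shift_defect :: "'a::euclidean_space set \<Rightarrow> 'a \<Rightarrow> ennreal" where
  "shift_defect F h = (\<integral>\<^sup>+x. indicator F x * indicator (UNIV - F) (x + h) \<partial>lborel)"

lemma borel_measurable_shift_defect [measurable]:
  assumes [measurable]: "F \<in> sets borel"
  shows "shift_defect F \<in> borel_measurable borel"
  unfolding shift_defect_def by measurable

lemma shift_defect_zero [simp]: "shift_defect F 0 = 0"
proof -
  have "(\<lambda>x. indicator F x * indicator (UNIV - F) (x + 0) :: ennreal) = (\<lambda>x. 0)"
    by (auto simp: indicator_def fun_eq_iff)
  then show ?thesis unfolding shift_defect_def by simp
qed

lemma shift_defect_add_le: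
  assumes [measurable]: "F \<in> sets borel"
  shows "shift_defect F (a + b) \<le> shift_defect F a + shift_defect F b"
proof -
  have "shift_defect F (a + b) \<le> (\<integral>\<^sup>+x. indicator F x * indicator (UNIV - F) (x + a)
          + indicator F (x + a) * indicator (UNIV - F) (x + a + b) \<partial>lborel)"
    unfolding shift_defect_def by (intro nn_integral_mono) (auto simp: indicator_def add.assoc)
  also have "\<dots> = shift_defect F a
      + (\<integral>\<^sup>+x. indicator F (x + a) * indicator (UNIV - F) (x + a + b) \<partial>lborel)"
    unfolding shift_defect_def by (subst nn_integral_add) auto
  also have "(\<integral>\<^sup>+x. indicator F (x + a) * indicator (UNIV - F) (x + a + b) \<partial>lborel) = shift_defect F b"
    unfolding shift_defect_def
    using nn_integral_lborel_translate[of "\<lambda>x. indicator F x * indicator (UNIV - F) (x + b)" a]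
    by (simp add: add.assoc add.commute[of a b])
  finally show ?thesis .
qed

lemma shift_defect_scaleR_of_nat_le:
  assumes [measurable]: "F \<in> sets borel"
  shows "shift_defect F (real m *\<^sub>R h) \<le> of_nat m * shift_defect F h"
proof (induction m)
  case (Suc m)
  have "shift_defect F (real (Suc m) *\<^sub>R h) = shift_defect F (real m *\<^sub>R h + h)"
    by (simp add: algebra_simps)
  also have "\<dots> \<le> shift_defect F (real m *\<^sub>R h) + shift_defect F h"
    by (rule shift_defect_add_le) fact
  also have "\<dots> \<le> of_nat m * shift_defect F h + shift_defect F h"
    using Suc by (intro add_right_mono)
  finally show ?case by (simp add: algebra_simps)
qed simp

lemma emeasure_ball_mult_shift_defect_le:
  fixes F :: "'a::euclidean_space set"
  assumes [measurable]: "F \<in> sets borel"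
  shows "emeasure lborel (ball p \<rho>) * shift_defect F y
     \<le> (\<integral>\<^sup>+h. indicator (ball p \<rho>) h * shift_defect F h \<partial>lborel)
       + (\<integral>\<^sup>+h. indicator (ball (y - p) \<rho>) h * shift_defect F h \<partial>lborel)"
proof -
  have [measurable]: "ball c \<rho> \<in> sets borel" for c :: 'a
    by (simp add: borel_open)
  have "emeasure lborel (ball p \<rho>) * shift_defect F y
      = (\<integral>\<^sup>+h. indicator (ball p \<rho>) h * shift_defect F y \<partial>lborel)"
    by (subst nn_integral_multc) auto
  also have "\<dots> \<le> (\<integral>\<^sup>+h. indicator (ball p \<rho>) h * shift_defect F h
      + indicator (ball p \<rho>) h * shift_defect F (y - h) \<partial>lborel)"
  proof (intro nn_integral_mono)
    fix h :: 'a
    show "indicator (ball p \<rho>) h * shift_defect F y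
        \<le> indicator (ball p \<rho>) h * shift_defect F h + indicator (ball p \<rho>) h * shift_defect F (y - h)"
      using shift_defect_add_le[OF assms, of h "y - h"] by (auto simp: indicator_def)
  qed
  also have "\<dots> = (\<integral>\<^sup>+h. indicator (ball p \<rho>) h * shift_defect F h \<partial>lborel)
      + (\<integral>\<^sup>+h. indicator (ball (y - p) \<rho>) (y - h) * shift_defect F (y - h) \<partial>lborel)"
    by (subst nn_integral_add)
       (auto simp: indicator_def dist_norm norm_minus_commute algebra_simps intro!: nn_integral_cong)
  also have "(\<integral>\<^sup>+h. indicator (ball (y - p) \<rho>) (y - h) * shift_defect F (y - h) \<partial>lborel)
      = (\<integral>\<^sup>+h. indicator (ball (y - p) \<rho>) h * shift_defect F h \<partial>lborel)"
    by (rule nn_integral_lborel_reflect) measurable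
  finally show ?thesis .
qed

lemma shift_defect_le_L1_dist:
  fixes E F :: "'a::euclidean_space set"
  assumes [measurable]: "E \<in> sets borel" "F \<in> sets borel"
  shows "shift_defect E h
    \<le> shift_defect F h + 2 * (\<integral>\<^sup>+x. ennreal \<bar>indicator F x - indicator E x :: real\<bar> \<partial>lborel)"
proof -
  let ?D = "\<lambda>x. ennreal \<bar>indicator F x - indicator E x :: real\<bar>"
  have "shift_defect E h
      \<le> (\<integral>\<^sup>+x. indicator F x * indicator (UNIV - F) (x + h) + (?D x + ?D (x + h)) \<partial>lborel)"
    unfolding shift_defect_def
  proof (intro nn_integral_mono)
    fix x
    show "indicator E x * indicator (UNIV - E) (x + h)
        \<le> indicator F x * indicator (UNIV - F) (x + h) + (?D x + ?D (x + h))"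
      by (cases "x \<in> E"; cases "x + h \<in> E"; cases "x \<in> F"; cases "x + h \<in> F") simp_all
  qed
  also have "\<dots> = shift_defect F h + ((\<integral>\<^sup>+x. ?D x \<partial>lborel) + (\<integral>\<^sup>+x. ?D (x + h) \<partial>lborel))"
    unfolding shift_defect_def by (subst nn_integral_add; simp add: nn_integral_add)
  also have "(\<integral>\<^sup>+x. ?D (x + h) \<partial>lborel) = (\<integral>\<^sup>+x. ?D x \<partial>lborel)"
    by (rule nn_integral_lborel_translate) measurable
  finally show ?thesis by (simp add: mult_2)
qed

lemma integral_shift_defect:
  fixes E :: "'a::euclidean_space set"
  assumes [measurable]: "E \<in> sets borel"
  shows "(LINT x|lborel. indicator E x * indicator (UNIV - E) (x + h) :: real) = enn2real (shift_defect E h)"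
proof -
  have "(LINT x|lborel. indicator E x * indicator (UNIV - E) (x + h) :: real)
      = enn2real (\<integral>\<^sup>+x. ennreal (indicator E x * indicator (UNIV - E) (x + h)) \<partial>lborel)"
    by (rule integral_eq_nn_integral) auto
  also have "(\<lambda>x. ennreal (indicator E x * indicator (UNIV - E) (x + h)))
      = (\<lambda>x. indicator E x * indicator (UNIV - E) (x + h))"
    by (auto simp: indicator_def fun_eq_iff)
  finally show ?thesis unfolding shift_defect_def .
qed

lemma shift_defect_le_of_L1_limit:
  fixes F :: "nat \<Rightarrow> 'a::euclidean_space set"
  assumes [measurable]: "\<And>n. F n \<in> sets borel" "E \<in> sets borel"
    and L1: "(\<lambda>n. \<integral>\<^sup>+x. ennreal \<bar>indicator (F n) x - indicator E x :: real\<bar> \<partial>lborel) \<longlonglongrightarrow> 0"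
    and bound: "eventually (\<lambda>n. shift_defect (F n) h \<le> c) sequentially"
  shows "shift_defect E h \<le> c"
proof -
  define \<delta> where "\<delta> n = (\<integral>\<^sup>+x. ennreal \<bar>indicator (F n) x - indicator E x :: real\<bar> \<partial>lborel)" for n
  have "(\<lambda>n. c + (\<delta> n + \<delta> n)) \<longlonglongrightarrow> c + (0 + 0)"
    using L1 unfolding \<delta>_def[symmetric] by (intro tendsto_intros)
  moreover have "eventually (\<lambda>n. shift_defect E h \<le> c + (\<delta> n + \<delta> n)) sequentially"
    using bound
  proof eventually_elim
    case (elim n)
    have "shift_defect E h \<le> shift_defect (F n) h + (\<delta> n + \<delta> n)"
      unfolding \<delta>_def mult_2[symmetric] by (rule shift_defect_le_L1_dist) auto
    then show ?case using elim by (rule order_trans[OF _ add_right_mono])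
  qed
  ultimately have "shift_defect E h \<le> c + (0 + 0)"
    by (rule tendsto_lowerbound) simp
  then show ?thesis by simp
qed

section \<open>The functional in terms of the shift defect\<close>

lemma borel_measurable_kernel_k [measurable]: "kernel_k d s r \<in> borel_measurable borel"
  unfolding kernel_k_def by measurable

lemma Jtilde_eq_nn_integral_shift_defect:
  fixes F :: "'a::euclidean_space set"
  assumes [measurable]: "F \<in> sets borel"
  shows "Jtilde s r F = (\<integral>\<^sup>+h. ennreal (kernel_k DIM('a) s r (norm h)) * shift_defect F h \<partial>lborel)"
proof -
  let ?K = "\<lambda>h::'a. ennreal (kernel_k DIM('a) s r (norm h))"
  have inner: "(\<integral>\<^sup>+y. ennreal (kernel_k DIM('a) s r (dist x y)) * indicator (UNIV - F) y \<partial>lborel)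
     = (\<integral>\<^sup>+h. ?K h * indicator (UNIV - F) (x + h) \<partial>lborel)" for x :: 'a
    using nn_integral_lborel_translate
      [of "\<lambda>y. ennreal (kernel_k DIM('a) s r (dist x y)) * indicator (UNIV - F) y" x]
    by (simp add: dist_norm add.commute)
  have "Jtilde s r F
      = (\<integral>\<^sup>+x. (\<integral>\<^sup>+h. ?K h * indicator (UNIV - F) (x + h) \<partial>lborel) * indicator F x \<partial>lborel)"
    unfolding Jtilde_def nn_integral_completion inner ..
  also have "\<dots> = (\<integral>\<^sup>+x. (\<integral>\<^sup>+h. ?K h * indicator (UNIV - F) (x + h) * indicator F x \<partial>lborel) \<partial>lborel)"
    by (subst nn_integral_multc) auto
  also have "\<dots> = (\<integral>\<^sup>+h. (\<integral>\<^sup>+x. ?K h * indicator (UNIV - F) (x + h) * indicator F x \<partial>lborel) \<partial>lborel)"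
    by (rule lborel_pair.Fubini'[symmetric]) measurable
  also have "\<dots> = (\<integral>\<^sup>+h. ?K h * shift_defect F h \<partial>lborel)"
    unfolding shift_defect_def
    by (subst nn_integral_cmult[symmetric]) (auto simp: mult_ac intro!: nn_integral_cong)
  finally show ?thesis .
qed

lemma Jtilde_cong_AE:
  fixes A B :: "'a::euclidean_space set"
  assumes "AE x in lebesgue. (x \<in> A) = (x \<in> B)"
  shows "Jtilde s r A = Jtilde s r B"
proof -
  have inner: "(\<integral>\<^sup>+y. ennreal (kernel_k DIM('a) s r (dist x y)) * indicator (UNIV - A) y \<partial>lebesgue)
     = (\<integral>\<^sup>+y. ennreal (kernel_k DIM('a) s r (dist x y)) * indicator (UNIV - B) y \<partial>lebesgue)" for x
    by (rule nn_integral_cong_AE) (use assms in \<open>eventually_elim, simp add: indicator_def\<close>)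
  show ?thesis unfolding Jtilde_def inner
    by (rule nn_integral_cong_AE) (use assms in \<open>eventually_elim, simp add: indicator_def\<close>)
qed

section \<open>Lower bound by a sum over annuli\<close>

text \<open>
  For \<open>p = 6 \<rho> e\<close> and \<open>y = 4 \<rho> e\<close> these are the balls \<open>B(p, \<rho>)\<close> and \<open>B(y - p, \<rho>)\<close> of
  \<open>emeasure_ball_mult_shift_defect_le\<close>; both lie in the annulus \<open>\<rho> < |h| < 7 \<rho>\<close>.
\<close>
definition twin_balls :: "'a::euclidean_space \<Rightarrow> real \<Rightarrow> 'a set" where
  "twin_balls e \<rho> = ball ((6 * \<rho>) *\<^sub>R e) \<rho> \<union> ball ((-2 * \<rho>) *\<^sub>R e) \<rho>"

lemma twin_balls_borel [measurable]: "twin_balls e \<rho> \<in> sets borel"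
  unfolding twin_balls_def by (simp add: borel_open)

lemma norm_in_twin_balls:
  assumes "norm e = 1" "h \<in> twin_balls e \<rho>"
  shows "\<rho> < norm h" "norm h < 7 * \<rho>"
proof -
  have near: "\<bar>c\<bar> - \<rho> < norm h \<and> norm h < \<bar>c\<bar> + \<rho> \<and> 0 < \<rho>" if "dist (c *\<^sub>R e) h < \<rho>" for c
  proof -
    have "dist 0 (c *\<^sub>R e) \<le> dist 0 h + dist h (c *\<^sub>R e)" "dist 0 h \<le> dist 0 (c *\<^sub>R e) + dist (c *\<^sub>R e) h"
      by (rule dist_triangle)+
    moreover have "0 \<le> dist (c *\<^sub>R e) h" by simp
    ultimately show ?thesis
      using that assms(1) by (simp add: dist_commute)
  qed
  from assms(2) consider "dist ((6 * \<rho>) *\<^sub>R e) h < \<rho>" | "dist ((-2 * \<rho>) *\<^sub>R e) h < \<rho>"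
    unfolding twin_balls_def by auto
  then have "\<rho> < norm h \<and> norm h < 7 * \<rho>"
  proof cases
    case 1
    then show ?thesis using near[OF 1] by (auto simp: abs_mult)
  next
    case 2
    then show ?thesis using near[OF 2] by (auto simp: abs_mult)
  qed
  then show "\<rho> < norm h" "norm h < 7 * \<rho>" by auto
qed

lemma emeasure_ball_mult_shift_defect_le_twin_balls:
  fixes F :: "'a::euclidean_space set"
  assumes [measurable]: "F \<in> sets borel" and e: "norm e = 1" and "\<rho> > 0"
  shows "emeasure lborel (ball ((6 * \<rho>) *\<^sub>R e) \<rho>) * shift_defect F ((4 * \<rho>) *\<^sub>R e)
    \<le> (\<integral>\<^sup>+h. indicator (twin_balls e \<rho>) h * shift_defect F h \<partial>lborel)"
proof -
  have "ball ((6 * \<rho>) *\<^sub>R e) \<rho> \<inter> ball ((-2 * \<rho>) *\<^sub>R e) \<rho> = {}"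
  proof -
    have "(6 * \<rho>) *\<^sub>R e - (-2 * \<rho>) *\<^sub>R e = (6 * \<rho> - -2 * \<rho>) *\<^sub>R e"
      by (rule scaleR_diff_left[symmetric])
    then have "dist ((6 * \<rho>) *\<^sub>R e) ((-2 * \<rho>) *\<^sub>R e) = 8 * \<rho>"
      using e \<open>\<rho> > 0\<close> by (simp add: dist_norm)
    show ?thesis
    proof (rule equals0I)
      fix y assume "y \<in> ball ((6 * \<rho>) *\<^sub>R e) \<rho> \<inter> ball ((-2 * \<rho>) *\<^sub>R e) \<rho>"
      then have "dist ((6 * \<rho>) *\<^sub>R e) y < \<rho>" "dist ((-2 * \<rho>) *\<^sub>R e) y < \<rho>" by auto
      with \<open>dist ((6 * \<rho>) *\<^sub>R e) ((-2 * \<rho>) *\<^sub>R e) = 8 * \<rho>\<close>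
        dist_triangle2[of "(6 * \<rho>) *\<^sub>R e" "(-2 * \<rho>) *\<^sub>R e" y] \<open>\<rho> > 0\<close>
      show False by linarith
    qed
  qed
  then have split: "indicator (twin_balls e \<rho>) h
      = (indicator (ball ((6 * \<rho>) *\<^sub>R e) \<rho>) h + indicator (ball ((-2 * \<rho>) *\<^sub>R e) \<rho>) h :: ennreal)" for h
    unfolding twin_balls_def by (auto simp: indicator_def)
  have [measurable]: "ball c r \<in> sets borel" for c :: 'a and r
    by (simp add: borel_open)
  have "emeasure lborel (ball ((6 * \<rho>) *\<^sub>R e) \<rho>) * shift_defect F ((4 * \<rho>) *\<^sub>R e)
    \<le> (\<integral>\<^sup>+h. indicator (ball ((6 * \<rho>) *\<^sub>R e) \<rho>) h * shift_defect F h \<partial>lborel)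
      + (\<integral>\<^sup>+h. indicator (ball ((4 * \<rho>) *\<^sub>R e - (6 * \<rho>) *\<^sub>R e) \<rho>) h * shift_defect F h \<partial>lborel)"
    by (rule emeasure_ball_mult_shift_defect_le) fact
  also have "(4 * \<rho>) *\<^sub>R e - (6 * \<rho>) *\<^sub>R e = (-2 * \<rho>) *\<^sub>R e"
    by (subst scaleR_diff_left[symmetric]) simp
  also have "(\<integral>\<^sup>+h. indicator (ball ((6 * \<rho>) *\<^sub>R e) \<rho>) h * shift_defect F h \<partial>lborel)
      + (\<integral>\<^sup>+h. indicator (ball ((-2 * \<rho>) *\<^sub>R e) \<rho>) h * shift_defect F h \<partial>lborel)
    = (\<integral>\<^sup>+h. indicator (twin_balls e \<rho>) h * shift_defect F h \<partial>lborel)"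
    unfolding split by (subst nn_integral_add[symmetric]) (auto simp: distrib_right)
  finally show ?thesis .
qed

lemma shift_defect_le_twin_balls_integral:
  fixes F :: "'a::euclidean_space set"
  assumes [measurable]: "F \<in> sets borel" and e: "norm e = 1" and \<rho>: "\<rho> > 0"
  shows "ennreal (unit_ball_vol DIM('a) * \<rho> ^ DIM('a)) * shift_defect F ((real m * (4 * \<rho>)) *\<^sub>R e)
    \<le> of_nat m * (\<integral>\<^sup>+h. indicator (twin_balls e \<rho>) h * shift_defect F h \<partial>lborel)"
proof -
  have "shift_defect F ((real m * (4 * \<rho>)) *\<^sub>R e) \<le> of_nat m * shift_defect F ((4 * \<rho>) *\<^sub>R e)"
    using shift_defect_scaleR_of_nat_le[OF assms(1), of m "(4 * \<rho>) *\<^sub>R e"] by simp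
  then have "ennreal (unit_ball_vol DIM('a) * \<rho> ^ DIM('a)) * shift_defect F ((real m * (4 * \<rho>)) *\<^sub>R e)
      \<le> ennreal (unit_ball_vol DIM('a) * \<rho> ^ DIM('a)) * (of_nat m * shift_defect F ((4 * \<rho>) *\<^sub>R e))"
    by (rule mult_left_mono) simp
  also have "\<dots> = of_nat m * (emeasure lborel (ball ((6 * \<rho>) *\<^sub>R e) \<rho>) * shift_defect F ((4 * \<rho>) *\<^sub>R e))"
    using \<rho> by (simp add: emeasure_ball mult_ac)
  also have "\<dots> \<le> of_nat m * (\<integral>\<^sup>+h. indicator (twin_balls e \<rho>) h * shift_defect F h \<partial>lborel)"
    by (intro mult_left_mono emeasure_ball_mult_shift_defect_le_twin_balls) (use e \<rho> in auto)
  finally show ?thesis .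
qed

definition annulus_radius :: "real \<Rightarrow> nat \<Rightarrow> real" where
  "annulus_radius t j = t / (4 * 8 ^ j)"

lemma annulus_radius_pos: "t > 0 \<Longrightarrow> annulus_radius t j > 0"
  by (simp add: annulus_radius_def)

lemma twin_balls_annulus_radius_disjoint:
  assumes "norm e = 1" "t > 0" "i \<noteq> j"
  shows "twin_balls e (annulus_radius t i) \<inter> twin_balls e (annulus_radius t j) = {}"
proof -
  have "twin_balls e (annulus_radius t i) \<inter> twin_balls e (annulus_radius t j) = {}" if "i < j" for i j
  proof -
    have "(8::real) ^ Suc i \<le> 8 ^ j"
      using that by (intro power_increasing) auto
    moreover have "(0::real) \<le> 8 ^ i" by simp
    ultimately have "7 * 8 ^ i \<le> (8::real) ^ j" unfolding power_Suc by linarith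
    then have "7 * annulus_radius t j \<le> annulus_radius t i"
      unfolding annulus_radius_def using assms(2) by (simp add: field_simps)
    then show ?thesis
      using norm_in_twin_balls[OF assms(1)] by fastforce
  qed
  then show ?thesis
    using assms(3) by (metis inf_commute linorder_neqE_nat)
qed

lemma kernel_k_ge_powr:
  assumes "0 < r" "r \<le> R" "u \<le> R" "0 \<le> real d + s"
  shows "R powr (-(real d + s)) \<le> kernel_k d s r u"
  unfolding kernel_k_def using assms by (auto intro: powr_mono2')

lemma sum_nn_integral_disjoint_le:
  fixes S :: "nat \<Rightarrow> 'a::euclidean_space set" and w :: "nat \<Rightarrow> ennreal" and g K :: "'a \<Rightarrow> ennreal"
  assumes [measurable]: "\<And>j. S j \<in> sets borel" "g \<in> borel_measurable borel"
    and disjoint: "\<And>i j. i < N \<Longrightarrow> j < N \<Longrightarrow> i \<noteq> j \<Longrightarrow> S i \<inter> S j = {}"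
    and weight: "\<And>j h. j < N \<Longrightarrow> h \<in> S j \<Longrightarrow> w j \<le> K h"
  shows "(\<Sum>j<N. w j * (\<integral>\<^sup>+h. indicator (S j) h * g h \<partial>lborel)) \<le> (\<integral>\<^sup>+h. K h * g h \<partial>lborel)"
proof -
  have pointwise: "(\<Sum>j<N. w j * indicator (S j) h) \<le> K h" for h
  proof (cases "\<exists>j<N. h \<in> S j")
    case True
    then obtain j where j: "j < N" "h \<in> S j" by auto
    then have "(\<Sum>i<N. w i * indicator (S i) h) = w j"
      using disjoint[of j] by (subst sum.remove[of _ j]) (auto simp: indicator_def intro!: sum.neutral)
    then show ?thesis using weight[OF j] by simp
  qed (auto simp: indicator_def intro!: sum.neutral)
  have "(\<Sum>j<N. w j * (\<integral>\<^sup>+h. indicator (S j) h * g h \<partial>lborel))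
      = (\<Sum>j<N. (\<integral>\<^sup>+h. w j * indicator (S j) h * g h \<partial>lborel))"
    by (simp add: nn_integral_cmult mult.assoc)
  also have "\<dots> = (\<integral>\<^sup>+h. (\<Sum>j<N. w j * indicator (S j) h * g h) \<partial>lborel)"
    by (rule nn_integral_sum[symmetric]) auto
  also have "\<dots> = (\<integral>\<^sup>+h. (\<Sum>j<N. w j * indicator (S j) h) * g h \<partial>lborel)"
    by (simp only: sum_distrib_right)
  also have "\<dots> \<le> (\<integral>\<^sup>+h. K h * g h \<partial>lborel)"
    by (intro nn_integral_mono mult_right_mono pointwise) auto
  finally show ?thesis .
qed

lemma annulus_weight_mult_shift_defect_le:
  fixes F :: "'a::euclidean_space set"
  assumes [measurable]: "F \<in> sets borel" and e: "norm e = 1" and \<rho>: "\<rho> > 0" and t: "t = 4 * \<rho> * 8 ^ j"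
  shows "ennreal (4 * unit_ball_vol DIM('a) * 7 powr -(real DIM('a) + s) / t * \<rho> powr (1 - s))
      * shift_defect F (t *\<^sub>R e)
    \<le> ennreal ((7 * \<rho>) powr -(real DIM('a) + s))
      * (\<integral>\<^sup>+h. indicator (twin_balls e \<rho>) h * shift_defect F h \<partial>lborel)"
proof -
  define d where "d = DIM('a)"
  define \<omega> where "\<omega> = unit_ball_vol DIM('a)"
  define w where "w = (7 * \<rho>) powr -(real d + s)"
  define I where "I = (\<integral>\<^sup>+h. indicator (twin_balls e \<rho>) h * shift_defect F h \<partial>lborel)"
  have "0 \<le> w / 8 ^ j" "0 < \<omega> * \<rho> ^ d"
    unfolding w_def \<omega>_def using \<rho> by auto
  have "1 - s = -(real d + s) + real d + 1" by simp
  then have "\<rho> powr (1 - s) = \<rho> powr -(real d + s) * \<rho> powr real d * \<rho> powr 1"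
    by (simp only: powr_add)
  then have "4 * \<omega> * 7 powr -(real d + s) / t * \<rho> powr (1 - s) = w / 8 ^ j * (\<omega> * \<rho> ^ d)"
    unfolding w_def t using \<rho> by (simp add: powr_realpow powr_mult field_simps)
  then have "ennreal (4 * \<omega> * 7 powr -(real d + s) / t * \<rho> powr (1 - s)) * shift_defect F (t *\<^sub>R e)
      = ennreal (w / 8 ^ j) * (ennreal (\<omega> * \<rho> ^ d) * shift_defect F (t *\<^sub>R e))"
    using \<open>0 \<le> w / 8 ^ j\<close> \<open>0 < \<omega> * \<rho> ^ d\<close> by (simp only: ennreal_mult less_imp_le mult.assoc)
  also have "\<dots> \<le> ennreal (w / 8 ^ j) * (of_nat (8 ^ j) * I)"
  proof (rule mult_left_mono)
    have "t = real (8 ^ j) * (4 * \<rho>)" unfolding t by simp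
    then show "ennreal (\<omega> * \<rho> ^ d) * shift_defect F (t *\<^sub>R e) \<le> of_nat (8 ^ j) * I"
      unfolding \<omega>_def d_def I_def using shift_defect_le_twin_balls_integral[OF assms(1) e \<rho>] by metis
  qed simp
  also have "\<dots> = ennreal (w / 8 ^ j) * of_nat (8 ^ j) * I"
    by (simp only: mult.assoc)
  also have "ennreal (w / 8 ^ j) * of_nat (8 ^ j) = ennreal w"
    by (simp add: ennreal_of_nat_eq_real_of_nat w_def flip: ennreal_mult)
  finally show ?thesis unfolding w_def I_def \<omega>_def d_def .
qed

lemma Jtilde_ge_sum_annuli:
  fixes F :: "'a::euclidean_space set" and e :: 'a
  assumes [measurable]: "F \<in> sets borel" and e: "norm e = 1" and t: "t > 0" and r: "r > 0" and s: "s \<ge> 0"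
    and admissible: "\<And>j. j < N \<Longrightarrow> r \<le> 7 * annulus_radius t j"
  shows "ennreal (4 * unit_ball_vol DIM('a) * 7 powr -(real DIM('a) + s) / t
            * (\<Sum>j<N. annulus_radius t j powr (1 - s))) * shift_defect F (t *\<^sub>R e)
    \<le> Jtilde s r F"
proof -
  define c where "c = 4 * unit_ball_vol DIM('a) * 7 powr -(real DIM('a) + s) / t"
  define \<rho> where "\<rho> = annulus_radius t"
  have \<rho>: "\<rho> j > 0" "t = 4 * \<rho> j * 8 ^ j" for j
    unfolding \<rho>_def annulus_radius_def using t by auto
  define I where "I j = (\<integral>\<^sup>+h. indicator (twin_balls e (\<rho> j)) h * shift_defect F h \<partial>lborel)" for j
  have "ennreal (c * (\<Sum>j<N. \<rho> j powr (1 - s))) = (\<Sum>j<N. ennreal (c * \<rho> j powr (1 - s)))"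
    unfolding c_def using t by (simp add: sum_distrib_left sum_ennreal)
  then have "ennreal (c * (\<Sum>j<N. \<rho> j powr (1 - s))) * shift_defect F (t *\<^sub>R e)
      = (\<Sum>j<N. ennreal (c * \<rho> j powr (1 - s)) * shift_defect F (t *\<^sub>R e))"
    by (simp only: sum_distrib_right)
  also have "\<dots> \<le> (\<Sum>j<N. ennreal ((7 * \<rho> j) powr -(real DIM('a) + s)) * I j)"
    unfolding c_def I_def by (intro sum_mono annulus_weight_mult_shift_defect_le[OF assms(1) e \<rho>])
  also have "\<dots> \<le> (\<integral>\<^sup>+h. ennreal (kernel_k DIM('a) s r (norm h)) * shift_defect F h \<partial>lborel)"
    unfolding I_def
  proof (rule sum_nn_integral_disjoint_le)
    show "i < N \<Longrightarrow> j < N \<Longrightarrow> i \<noteq> j \<Longrightarrow> twin_balls e (\<rho> i) \<inter> twin_balls e (\<rho> j) = {}" for i j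
      unfolding \<rho>_def using twin_balls_annulus_radius_disjoint[OF e t] by blast
    show "ennreal ((7 * \<rho> j) powr -(real DIM('a) + s)) \<le> ennreal (kernel_k DIM('a) s r (norm h))"
      if "j < N" "h \<in> twin_balls e (\<rho> j)" for j h
      using norm_in_twin_balls[OF e that(2)] admissible[OF that(1)] r s
      by (intro ennreal_leI kernel_k_ge_powr) (auto simp: \<rho>_def)
  qed auto
  also have "\<dots> = Jtilde s r F"
    by (rule Jtilde_eq_nn_integral_shift_defect[symmetric]) fact
  finally show ?thesis unfolding c_def \<rho>_def .
qed

section \<open>Counting the admissible scales\<close>

lemma admissible_annulus_count:
  fixes t r :: real
  assumes "t > 0" "r > 0" "r < t / 8"
  defines "N \<equiv> nat \<lfloor>log 8 (t / r)\<rfloor>"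
  shows "N \<ge> 1" "t / r < 8 ^ (N + 1)" "log 8 (t / r) - 1 < real N"
    and "\<And>j. j < N \<Longrightarrow> r \<le> 7 * annulus_radius t j"
proof -
  have q: "t / r > 8" using assms by (simp add: field_simps)
  then have "log 8 (t / r) > 1" by (subst less_log_iff) auto
  then have N: "real N = real_of_int \<lfloor>log 8 (t / r)\<rfloor>" "N \<ge> 1"
    unfolding N_def by linarith+
  then show "N \<ge> 1" "log 8 (t / r) - 1 < real N" by linarith+
  have "t / r = 8 powr (log 8 (t / r))" using q by simp
  also have "\<dots> < 8 powr (real (N + 1))" using N by (intro powr_less_mono) linarith+
  also have "\<dots> = 8 ^ (N + 1)" by (rule powr_realpow) simp
  finally show "t / r < 8 ^ (N + 1)" .
  have "(8::real) ^ N = 8 powr (real N)" by (simp add: powr_realpow)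
  also have "\<dots> \<le> 8 powr (log 8 (t / r))" using N by (intro powr_mono) auto
  finally have upper: "8 ^ N * r \<le> t" using q assms(2) by (simp add: field_simps)
  fix j assume "j < N"
  then have "(8::real) ^ (j + 1) \<le> 8 ^ N" by (intro power_increasing) auto
  then have "8 * 8 ^ j * r \<le> 8 ^ N * r" using assms(2) by (intro mult_right_mono) auto
  moreover have "4 * 8 ^ j * r \<le> 8 * 8 ^ j * r" using assms(2) by simp
  ultimately have "4 * 8 ^ j * r \<le> 7 * t" using upper assms(1) by linarith
  then show "r \<le> 7 * annulus_radius t j"
    unfolding annulus_radius_def by (simp add: field_simps)
qed

lemma sigma_s_one_le_annulus_count:
  assumes "t > 0"
  shows "\<forall>\<^sub>F r in at_right 0. \<exists>N. (\<forall>j<N. r \<le> 7 * annulus_radius t j) \<and> sigma_s d 1 r \<le> 2 * ln 8 * real N"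
  unfolding eventually_at_right_field
proof (intro exI[of _ "min 1 (min (t / 8) ((t / 8) ^ 2))"] conjI allI impI)
  show "0 < min 1 (min (t / 8) ((t / 8) ^ 2))" using assms by simp
  fix r :: real assume r: "0 < r" "r < min 1 (min (t / 8) ((t / 8) ^ 2))"
  define N where "N = nat \<lfloor>log 8 (t / r)\<rfloor>"
  note count = admissible_annulus_count[OF assms r(1), folded N_def]
  have "ln r < 0" using r by simp
  then have sigma: "sigma_s d 1 r = - ln r" by (simp add: sigma_s_def)
  have "ln r < ln ((t / 8) ^ 2)" using r assms by (subst ln_less_cancel_iff) auto
  also have "\<dots> = 2 * (ln t - ln 8)" using assms by (simp add: ln_realpow ln_div)
  finally have "ln r < 2 * (ln t - ln 8)" .
  moreover have "ln 8 * log 8 (t / r) = ln t - ln r" using assms r by (simp add: log_def ln_div)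
  moreover have "ln 8 * (log 8 (t / r) - 1) < ln 8 * real N" using count(3) r by (intro mult_strict_left_mono) auto
  ultimately show "\<exists>N. (\<forall>j<N. r \<le> 7 * annulus_radius t j) \<and> sigma_s d 1 r \<le> 2 * ln 8 * real N"
    using count(4) r unfolding sigma by (intro exI[of _ N]) (auto simp: algebra_simps)
qed

lemma sigma_s_le_annulus_count_powr:
  assumes "t > 0" "s > 1"
  shows "\<forall>\<^sub>F r in at_right 0. \<exists>N. (\<forall>j<N. r \<le> 7 * annulus_radius t j) \<and> sigma_s d s r
      \<le> (real d + s) / ((real d + 1) * (s - 1)) * 16 powr (s - 1) * (\<Sum>j<N. annulus_radius t j powr (1 - s))"
  unfolding eventually_at_right_field
proof (intro exI[of _ "t / 8"] conjI allI impI)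
  show "0 < t / 8" using assms by simp
  fix r :: real assume r: "0 < r" "r < t / 8"
  define N where "N = nat \<lfloor>log 8 (t / r)\<rfloor>"
  define K where "K = (real d + s) / ((real d + 1) * (s - 1)) * 16 powr (s - 1)"
  note count = admissible_annulus_count[OF assms(1) r, folded N_def]
  have "16 powr (s - 1) * 16 powr (1 - s) = (1::real)" by (simp flip: powr_add)
  then have sigma: "sigma_s d s r = K * (16 * r) powr (1 - s)"
    unfolding sigma_s_def K_def using assms(2) r by (simp add: powr_mult field_simps)
  have "N + 1 = (N - 1) + 2" using count(1) by simp
  then have "(8::real) ^ (N + 1) = 64 * 8 ^ (N - 1)"
    by (simp only: power_add) simp
  then have "annulus_radius t (N - 1) \<le> 16 * r"
    using count(2) r unfolding annulus_radius_def by (simp add: field_simps)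
  then have "(16 * r) powr (1 - s) \<le> annulus_radius t (N - 1) powr (1 - s)"
    using assms annulus_radius_pos by (intro powr_mono2') auto
  also have "\<dots> \<le> (\<Sum>j<N. annulus_radius t j powr (1 - s))"
    using count(1) by (intro member_le_sum) auto
  finally have "sigma_s d s r \<le> K * (\<Sum>j<N. annulus_radius t j powr (1 - s))"
    unfolding sigma K_def using assms(2) by (intro mult_left_mono) (auto simp: add_pos_nonneg)
  then show "\<exists>N. (\<forall>j<N. r \<le> 7 * annulus_radius t j) \<and> sigma_s d s r
      \<le> (real d + s) / ((real d + 1) * (s - 1)) * 16 powr (s - 1) * (\<Sum>j<N. annulus_radius t j powr (1 - s))"
    using count(4) unfolding K_def by blast
qed

lemma sigma_s_le_annulus_count:
  assumes "s \<ge> 1"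
  obtains K where "K > 0" and "\<And>t. t > 0 \<Longrightarrow> \<forall>\<^sub>F r in at_right 0. \<exists>N. (\<forall>j<N. r \<le> 7 * annulus_radius t j)
      \<and> sigma_s d s r \<le> K * (\<Sum>j<N. annulus_radius t j powr (1 - s))"
proof (cases "s = 1")
  case True
  have "(\<Sum>j<N. annulus_radius t j powr (1 - s)) = real N" if "t > 0" for t N
  proof -
    have "annulus_radius t j \<noteq> 0" for j
      using annulus_radius_pos[OF that, of j] by simp
    then show ?thesis using True by simp
  qed
  with True show ?thesis
    using that[of "2 * ln 8"] sigma_s_one_le_annulus_count by simp
next
  case False
  with assms have s: "s > 1" by simp
  show ?thesis
  proof (rule that)
    show "(real d + s) / ((real d + 1) * (s - 1)) * 16 powr (s - 1) > 0"
      using s by (simp add: add_pos_nonneg)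
  qed (rule sigma_s_le_annulus_count_powr[OF _ s])
qed

section \<open>A linear bound on the shift defect\<close>

lemma sigma_s_pos:
  assumes "s \<ge> 1" "0 < r" "r < 1"
  shows "0 < sigma_s d s r"
  using assms by (cases "s = 1") (auto simp: sigma_s_def add_pos_nonneg)

lemma shift_defect_le_of_Jtilde_le_sum_annuli:
  fixes F :: "'a::euclidean_space set"
  assumes [measurable]: "F \<in> sets borel" and e: "norm e = 1" and t: "t > 0" and r: "r > 0" and s: "s \<ge> 0"
    and admissible: "\<And>j. j < N \<Longrightarrow> r \<le> 7 * annulus_radius t j"
    and A: "0 < (\<Sum>j<N. annulus_radius t j powr (1 - s))"
    and J: "Jtilde s r F \<le> ennreal (M * (\<Sum>j<N. annulus_radius t j powr (1 - s)))" and M: "M \<ge> 0"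
  shows "shift_defect F (t *\<^sub>R e) \<le> ennreal (M / (4 * unit_ball_vol DIM('a) * 7 powr -(real DIM('a) + s)) * t)"
proof -
  define c where "c = 4 * unit_ball_vol DIM('a) * 7 powr -(real DIM('a) + s)"
  define A where "A = (\<Sum>j<N. annulus_radius t j powr (1 - s))"
  have "c > 0" "A > 0" unfolding c_def A_def using A by auto
  have "ennreal (c / t * A) * shift_defect F (t *\<^sub>R e) \<le> Jtilde s r F"
    using Jtilde_ge_sum_annuli[OF assms(1) e t r s admissible] unfolding c_def A_def by (simp add: mult.assoc)
  also have "\<dots> \<le> ennreal (c / t * A) * ennreal (M / c * t)"
    using J \<open>c > 0\<close> \<open>A > 0\<close> t M unfolding A_def[symmetric] by (simp add: mult_ac flip: ennreal_mult)
  finally show ?thesis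
    using \<open>c > 0\<close> \<open>A > 0\<close> t unfolding c_def[symmetric] by (subst (asm) ennreal_mult_le_mult_iff) auto
qed

lemma shift_defect_le_of_Jtilde_le:
  assumes "s \<ge> 1" "M \<ge> 0"
  obtains C where "C \<ge> 0"
    and "\<And>t e. t > 0 \<Longrightarrow> norm e = 1 \<Longrightarrow> \<forall>\<^sub>F r in at_right 0. \<forall>F :: 'a::euclidean_space set.
           F \<in> sets borel \<longrightarrow> Jtilde s r F \<le> ennreal (M * sigma_s DIM('a) s r)
           \<longrightarrow> shift_defect F (t *\<^sub>R e) \<le> ennreal (C * t)"
proof -
  obtain K where K: "K > 0" and count: "\<And>t. t > 0 \<Longrightarrow> \<forall>\<^sub>F r in at_right 0. \<exists>N.
      (\<forall>j<N. r \<le> 7 * annulus_radius t j) \<and> sigma_s DIM('a) s r \<le> K * (\<Sum>j<N. annulus_radius t j powr (1 - s))"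
    using sigma_s_le_annulus_count[OF assms(1)] by blast
  show ?thesis
  proof (rule that[of "M * K / (4 * unit_ball_vol DIM('a) * 7 powr -(real DIM('a) + s))"])
    fix t :: real and e :: 'a assume t: "t > 0" and e: "norm e = 1"
    have "\<forall>\<^sub>F r in at_right 0. 0 < r \<and> r < (1::real)"
      unfolding eventually_at_right_field by (intro exI[of _ 1]) auto
    with count[OF t] show "\<forall>\<^sub>F r in at_right 0. \<forall>F :: 'a set. F \<in> sets borel
        \<longrightarrow> Jtilde s r F \<le> ennreal (M * sigma_s DIM('a) s r) \<longrightarrow> shift_defect F (t *\<^sub>R e)
        \<le> ennreal (M * K / (4 * unit_ball_vol DIM('a) * 7 powr -(real DIM('a) + s)) * t)"
    proof eventually_elim
      case (elim r)
      then obtain N where admissible: "\<forall>j<N. r \<le> 7 * annulus_radius t j"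
        and sigma: "sigma_s DIM('a) s r \<le> K * (\<Sum>j<N. annulus_radius t j powr (1 - s))" by blast
      have "0 < K * (\<Sum>j<N. annulus_radius t j powr (1 - s))"
        using sigma sigma_s_pos[OF assms(1), of r "DIM('a)"] elim by linarith
      then have A: "0 < (\<Sum>j<N. annulus_radius t j powr (1 - s))"
        using K by (simp add: zero_less_mult_iff)
      have M_sigma: "M * sigma_s DIM('a) s r \<le> M * K * (\<Sum>j<N. annulus_radius t j powr (1 - s))"
        using mult_left_mono[OF sigma assms(2)] by (simp add: mult.assoc)
      show ?case
      proof (intro allI impI)
        fix F :: "'a set" assume "F \<in> sets borel" and J: "Jtilde s r F \<le> ennreal (M * sigma_s DIM('a) s r)"
        have "Jtilde s r F \<le> ennreal (M * K * (\<Sum>j<N. annulus_radius t j powr (1 - s)))"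
          by (rule order_trans[OF J ennreal_leI[OF M_sigma]])
        then show "shift_defect F (t *\<^sub>R e)
            \<le> ennreal (M * K / (4 * unit_ball_vol DIM('a) * 7 powr -(real DIM('a) + s)) * t)"
          using shift_defect_le_of_Jtilde_le_sum_annuli[OF \<open>F \<in> sets borel\<close> e t _ _ _ A] admissible elim assms K
          by auto
      qed
    qed
  qed (use assms K in simp)
qed

section \<open>From the linear bound to finite perimeter\<close>

lemma test_field_derivative_bounded:
  fixes \<phi> :: "'a::euclidean_space \<Rightarrow> 'a" and D :: "'a \<Rightarrow> ('a \<Rightarrow>\<^sub>L 'a)"
  assumes D: "continuous_on UNIV D" "\<And>x. (\<phi> has_derivative blinfun_apply (D x)) (at x)"
    and support: "compact (closure {x. \<phi> x \<noteq> 0})"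
  obtains B where "\<And>x. norm (D x) \<le> B"
proof -
  define K where "K = closure {x. \<phi> x \<noteq> 0}"
  have "compact (D ` K)" unfolding K_def
    by (rule compact_continuous_image[OF continuous_on_subset[OF D(1) subset_UNIV] support])
  then have "bounded (D ` K)" by (rule compact_imp_bounded)
  then obtain B where B: "\<forall>y\<in>D ` K. norm y \<le> B"
    unfolding Elementary_Metric_Spaces.bounded_iff by blast
  have "norm (D x) \<le> max B 0" for x
  proof (cases "x \<in> K")
    case True
    with B show ?thesis by auto
  next
    case False
    have "open (UNIV - K)" unfolding K_def by (intro open_Diff) auto
    moreover have "(\<lambda>_. 0) y = \<phi> y" if "y \<in> UNIV - K" for y
    proof -
      have "y \<notin> {x. \<phi> x \<noteq> 0}"
        using that closure_subset[of "{x. \<phi> x \<noteq> 0}"] unfolding K_def by auto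
      then show ?thesis by simp
    qed
    ultimately have "(\<phi> has_derivative (\<lambda>_. 0)) (at x)"
      using False by (intro has_derivative_transform_within_open[OF has_derivative_const]) blast+
    then have "blinfun_apply (D x) = (\<lambda>_. 0)"
      by (rule has_derivative_unique[OF D(2)])
    then have "D x = 0"
      by (intro blinfun_eqI) simp
    then show ?thesis by simp
  qed
  then show ?thesis by (rule that)
qed

lemma integral_indicator_mult_shift_diff_le:
  fixes E :: "'a::euclidean_space set" and \<psi> :: "'a \<Rightarrow> real"
  assumes [measurable]: "E \<in> sets borel" "\<psi> \<in> borel_measurable borel"
    and finite: "emeasure lborel E < \<infinity>" and bounded: "\<And>x. \<bar>\<psi> x\<bar> \<le> 1"
  shows "(LINT x|lborel. indicator E x * (\<psi> (x + h) - \<psi> x))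
    \<le> enn2real (shift_defect E h) + enn2real (shift_defect E (-h))"
proof -
  have E: "integrable lborel (\<lambda>x. indicator E (x + c) :: real)" for c
    using finite by (intro integrable_lborel_translate) auto
  have dominated: "integrable lborel f"
    if "f \<in> borel_measurable borel" "\<And>x. \<bar>f x\<bar> \<le> indicator E (x + c)" for f :: "'a \<Rightarrow> real" and c
    using that E[of c] by (intro Bochner_Integration.integrable_bound[OF E[of c]]) (auto simp: measurable_completion)
  have int: "integrable lborel (\<lambda>x. indicator E x * \<psi> (x + h))"
    "integrable lborel (\<lambda>x. indicator E x * \<psi> x)"
    "integrable lborel (\<lambda>x. indicator E (x - h) * \<psi> x)"
    "integrable lborel (\<lambda>x. indicator E (x - h) * indicator (UNIV - E) x :: real)"
    "integrable lborel (\<lambda>x. indicator E x * indicator (UNIV - E) (x - h) :: real)"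
    by (rule dominated[where c=0] dominated[where c="-h"]; use bounded in \<open>auto simp: indicator_def\<close>)+
  have "(LINT x|lborel. indicator E x * (\<psi> (x + h) - \<psi> x))
      = (LINT x|lborel. indicator E (x - h) * \<psi> x) - (LINT x|lborel. indicator E x * \<psi> x)"
    using int integral_lborel_translate[of "\<lambda>x. indicator E (x - h) * \<psi> x" h]
    by (simp add: right_diff_distrib)
  also have "\<dots> = (LINT x|lborel. (indicator E (x - h) - indicator E x) * \<psi> x)"
    using int by (simp add: left_diff_distrib)
  also have "\<dots> \<le> (LINT x|lborel. indicator E (x - h) * indicator (UNIV - E) x
      + indicator E x * indicator (UNIV - E) (x - h))"
    using int bounded by (intro integral_mono) (auto simp: left_diff_distrib indicator_def abs_le_iff)
  also have "\<dots> = (LINT x|lborel. indicator E (x - h) * indicator (UNIV - E) x)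
      + (LINT x|lborel. indicator E x * indicator (UNIV - E) (x - h) :: real)"
    using int by simp
  also have "(LINT x|lborel. indicator E (x - h) * indicator (UNIV - E) x :: real) = enn2real (shift_defect E h)"
    using integral_lborel_translate[of "\<lambda>x. indicator E (x - h) * indicator (UNIV - E) x :: real" h]
      integral_shift_defect[of E h] by simp
  also have "(LINT x|lborel. indicator E x * indicator (UNIV - E) (x - h) :: real) = enn2real (shift_defect E (-h))"
    using integral_shift_defect[of E "-h"] by simp
  finally show ?thesis .
qed

lemma integral_indicator_mult_difference_quotient_le:
  fixes E :: "'a::euclidean_space set" and \<psi> :: "'a \<Rightarrow> real"
  assumes [measurable]: "E \<in> sets borel" "\<psi> \<in> borel_measurable borel"
    and finite: "emeasure lborel E < \<infinity>" and bounded: "\<And>x. \<bar>\<psi> x\<bar> \<le> 1"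
    and linear: "\<And>t e. t > 0 \<Longrightarrow> norm e = 1 \<Longrightarrow> shift_defect E (t *\<^sub>R e) \<le> ennreal (C * t)"
    and "C \<ge> 0" "\<tau> > 0" "norm b = 1"
  shows "(LINT x|lborel. indicator E x * ((\<psi> (x + \<tau> *\<^sub>R b) - \<psi> x) / \<tau>)) \<le> 2 * C"
proof -
  have "shift_defect E (\<tau> *\<^sub>R b) \<le> ennreal (C * \<tau>)" "shift_defect E (\<tau> *\<^sub>R (-b)) \<le> ennreal (C * \<tau>)"
    using linear[of \<tau> b] linear[of \<tau> "-b"] assms(6-8) by auto
  then have "enn2real (shift_defect E (\<tau> *\<^sub>R b)) \<le> C * \<tau>" "enn2real (shift_defect E (- (\<tau> *\<^sub>R b))) \<le> C * \<tau>"
    using assms(6,7) by (auto intro!: enn2real_leI)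
  moreover have "(LINT x|lborel. indicator E x * ((\<psi> (x + \<tau> *\<^sub>R b) - \<psi> x) / \<tau>))
      = (LINT x|lborel. indicator E x * (\<psi> (x + \<tau> *\<^sub>R b) - \<psi> x)) / \<tau>"
    by (simp flip: integral_divide_zero)
  ultimately show ?thesis
    using integral_indicator_mult_shift_diff_le[OF assms(1-4), of "\<tau> *\<^sub>R b"] \<open>\<tau> > 0\<close>
    by (simp add: divide_le_eq)
qed

lemma tendsto_difference_quotient_inner:
  fixes \<phi> :: "'a::euclidean_space \<Rightarrow> 'a" and t :: "nat \<Rightarrow> real"
  assumes "(\<phi> has_derivative blinfun_apply L) (at x)" and "filterlim t (at 0) sequentially"
  shows "(\<lambda>m. (\<phi> (x + t m *\<^sub>R b) \<bullet> b - \<phi> x \<bullet> b) / t m) \<longlonglongrightarrow> L b \<bullet> b"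
proof -
  have "((\<lambda>u. x + u *\<^sub>R b) has_derivative (\<lambda>u. u *\<^sub>R b)) (at 0)"
    by (auto intro!: derivative_eq_intros)
  moreover have "(\<phi> has_derivative blinfun_apply L) (at (x + 0 *\<^sub>R b))"
    using assms(1) by simp
  ultimately have "((\<lambda>u. \<phi> (x + u *\<^sub>R b)) has_derivative (\<lambda>u. L (u *\<^sub>R b))) (at 0)"
    by (rule has_derivative_compose)
  then have "((\<lambda>u. \<phi> (x + u *\<^sub>R b) \<bullet> b) has_derivative (\<lambda>u. L (u *\<^sub>R b) \<bullet> b)) (at 0)"
    by (rule bounded_linear.has_derivative[OF bounded_linear_inner_left])
  moreover have "(\<lambda>u. L (u *\<^sub>R b) \<bullet> b) = (*) (L b \<bullet> b)"
    by (simp add: blinfun.scaleR_right fun_eq_iff mult.commute)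
  ultimately have "((\<lambda>u. \<phi> (x + u *\<^sub>R b) \<bullet> b) has_field_derivative (L b \<bullet> b)) (at 0)"
    unfolding has_field_derivative_def by simp
  then have "((\<lambda>u. (\<phi> (x + u *\<^sub>R b) \<bullet> b - \<phi> x \<bullet> b) / u) \<longlongrightarrow> L b \<bullet> b) (at 0)"
    unfolding DERIV_def by simp
  then show ?thesis
    using assms(2) by (rule filterlim_compose)
qed

lemma integral_indicator_mult_partial_derivative_le:
  fixes \<phi> :: "'a::euclidean_space \<Rightarrow> 'a" and D :: "'a \<Rightarrow> ('a \<Rightarrow>\<^sub>L 'a)"
  assumes [measurable]: "E \<in> sets borel" and finite: "emeasure lborel E < \<infinity>"
    and linear: "\<And>t e. t > 0 \<Longrightarrow> norm e = 1 \<Longrightarrow> shift_defect E (t *\<^sub>R e) \<le> ennreal (C * t)"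
    and C: "C \<ge> 0"
    and D: "continuous_on UNIV D" "\<And>x. (\<phi> has_derivative blinfun_apply (D x)) (at x)"
    and D_bounded: "\<And>x. norm (D x) \<le> B"
    and \<phi>_bounded: "\<And>x. norm (\<phi> x) \<le> 1" and b: "b \<in> Basis"
  shows "(LINT x|lborel. indicator E x * (D x b \<bullet> b)) \<le> 2 * C"
proof -
  define t where "t m = inverse (real (Suc m))" for m
  have t: "t m > 0" for m unfolding t_def by simp
  have "filterlim t (at 0) sequentially"
    unfolding filterlim_at t_def using LIMSEQ_inverse_real_of_nat by auto
  define \<psi> where "\<psi> y = \<phi> y \<bullet> b" for y
  have [measurable]: "\<phi> \<in> borel_measurable borel"
    using D(2) by (intro borel_measurable_continuous_onI continuous_at_imp_continuous_on)
      (blast intro: has_derivative_continuous)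
  have [measurable]: "\<psi> \<in> borel_measurable borel" "(\<lambda>x. D x b \<bullet> b) \<in> borel_measurable borel"
    unfolding \<psi>_def using continuous_on_blinfun_matrix[OF D(1)]
    by (auto intro: borel_measurable_continuous_onI)
  define q where "q m x = indicator E x * ((\<psi> (x + t m *\<^sub>R b) - \<psi> x) / t m)" for m x
  have lipschitz: "norm (\<phi> y - \<phi> x) \<le> B * norm (y - x)" for x y
    by (rule differentiable_bound[of UNIV \<phi> "\<lambda>x. blinfun_apply (D x)"])
       (use D D_bounded in \<open>auto simp: norm_blinfun.rep_eq[symmetric]\<close>)
  have "norm (q m x) \<le> B * indicator E x" for m x
  proof -
    have "\<bar>\<psi> (x + t m *\<^sub>R b) - \<psi> x\<bar> \<le> norm (\<phi> (x + t m *\<^sub>R b) - \<phi> x)"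
      unfolding \<psi>_def inner_diff_left[symmetric] by (rule Basis_le_norm[OF b])
    also have "\<dots> \<le> B * t m"
      using lipschitz[of x "x + t m *\<^sub>R b"] b t[of m] by (simp add: norm_minus_commute)
    finally show ?thesis
      unfolding q_def using t[of m] by (auto simp: indicator_def abs_mult field_simps)
  qed
  moreover have "(\<lambda>m. q m x) \<longlonglongrightarrow> indicator E x * (D x b \<bullet> b)" for x
    unfolding q_def \<psi>_def
    by (intro tendsto_mult_left tendsto_difference_quotient_inner D(2)) fact
  ultimately have "(\<lambda>m. LINT x|lborel. q m x) \<longlonglongrightarrow> (LINT x|lborel. indicator E x * (D x b \<bullet> b))"
    using finite unfolding q_def
    by (intro integral_dominated_convergence[where w="\<lambda>x. B * indicator E x"] always_eventually allI) auto
  moreover have "\<bar>\<psi> y\<bar> \<le> 1" for y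
    unfolding \<psi>_def using Basis_le_norm[OF b, of "\<phi> y"] \<phi>_bounded[of y] by linarith
  then have "(LINT x|lborel. q m x) \<le> 2 * C" for m
    unfolding q_def using b t C by (intro integral_indicator_mult_difference_quotient_le finite linear) auto
  ultimately show ?thesis
    by (intro tendsto_upperbound always_eventually) auto
qed

lemma perimeter_le_of_shift_defect_le:
  fixes E :: "'a::euclidean_space set" and C :: real
  assumes [measurable]: "E \<in> sets borel" and finite: "emeasure lborel E < \<infinity>" and C: "C \<ge> 0"
    and linear: "\<And>t e. t > 0 \<Longrightarrow> norm e = 1 \<Longrightarrow> shift_defect E (t *\<^sub>R e) \<le> ennreal (C * t)"
  shows "perimeter E \<le> ereal (2 * real DIM('a) * C)"
  unfolding perimeter_def
proof (rule SUP_least)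
  fix \<phi> :: "'a \<Rightarrow> 'a" assume "\<phi> \<in> test_fields"
  then obtain D :: "'a \<Rightarrow> ('a \<Rightarrow>\<^sub>L 'a)" where D: "continuous_on UNIV D"
      "\<And>x. (\<phi> has_derivative blinfun_apply (D x)) (at x)"
    and support: "compact (closure {x. \<phi> x \<noteq> 0})" and \<phi>_bounded: "\<And>x. norm (\<phi> x) \<le> 1"
    unfolding test_fields_def by blast
  obtain B where B: "\<And>x. norm (D x) \<le> B"
    using test_field_derivative_bounded[OF D support] by blast
  have [measurable]: "(\<lambda>x. D x b \<bullet> b) \<in> borel_measurable borel" for b
    by (rule borel_measurable_continuous_onI[OF continuous_on_blinfun_matrix[OF D(1)]])
  have integrable: "integrable lborel (\<lambda>x. indicator E x * (D x b \<bullet> b))" if "b \<in> Basis" for b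
  proof (rule Bochner_Integration.integrable_bound)
    show "integrable lborel (\<lambda>x. B * indicator E x :: real)" using finite by auto
    have "\<bar>D x b \<bullet> b\<bar> \<le> B" for x
      using Basis_le_norm[OF that, of "D x b"] norm_blinfun[of "D x" b] B[of x] that by simp
    then show "AE x in lborel. norm (indicator E x * (D x b \<bullet> b)) \<le> norm (B * indicator E x)"
      by (intro always_eventually allI) (auto simp: indicator_def abs_mult intro: order_trans[OF _ abs_ge_self])
  qed auto
  have "(LINT x:E|lebesgue. divergence \<phi> x) = (LINT x|lborel. (\<Sum>b\<in>Basis. indicator E x * (D x b \<bullet> b)))"
    unfolding set_lebesgue_integral_def divergence_def frechet_derivative_at[OF D(2), symmetric]
    by (subst integral_completion) (auto simp: sum_distrib_left)
  also have "\<dots> = (\<Sum>b\<in>Basis. LINT x|lborel. indicator E x * (D x b \<bullet> b))"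
    by (rule Bochner_Integration.integral_sum[where f="\<lambda>b x. indicator E x * (D x b \<bullet> b)"]) (use integrable in auto)
  also have "\<dots> \<le> (\<Sum>b\<in>(Basis::'a set). 2 * C)"
    by (intro sum_mono integral_indicator_mult_partial_derivative_le[OF _ finite linear C D B \<phi>_bounded]) auto
  finally show "ereal (LINT x:E|lebesgue. divergence \<phi> x) \<le> ereal (2 * real DIM('a) * C)"
    by simp
qed

lemma finite_perimeter_of_Jtilde_le_borel:
  fixes r :: "nat \<Rightarrow> real" and F :: "nat \<Rightarrow> 'a::euclidean_space set" and E :: "'a set"
  assumes "s \<ge> 1" and "\<And>n. r n > 0" and "r \<longlonglongrightarrow> 0"
    and [measurable]: "\<And>n. F n \<in> sets borel" "E \<in> sets borel" and "emeasure lborel E < \<infinity>"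
    and L1: "(\<lambda>n. \<integral>\<^sup>+x. ennreal \<bar>indicator (F n) x - indicator E x :: real\<bar> \<partial>lborel) \<longlonglongrightarrow> 0"
    and "M \<ge> 0" and J: "eventually (\<lambda>n. Jtilde s (r n) (F n) \<le> ennreal (M * sigma_s DIM('a) s (r n))) sequentially"
  shows "finite_perimeter E"
proof -
  obtain C where C: "C \<ge> 0" and bound: "\<And>t e. t > 0 \<Longrightarrow> norm e = 1 \<Longrightarrow> \<forall>\<^sub>F r in at_right 0. \<forall>F :: 'a set.
      F \<in> sets borel \<longrightarrow> Jtilde s r F \<le> ennreal (M * sigma_s DIM('a) s r) \<longrightarrow> shift_defect F (t *\<^sub>R e) \<le> ennreal (C * t)"
    using shift_defect_le_of_Jtilde_le[OF assms(1,8)] by blast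
  have r: "filterlim r (at_right 0) sequentially"
    using assms(2,3) by (intro tendsto_imp_filterlim_at_right) (auto intro: always_eventually)
  have "shift_defect E (t *\<^sub>R e) \<le> ennreal (C * t)" if "t > 0" "norm e = 1" for t e
  proof (rule shift_defect_le_of_L1_limit[OF _ _ L1])
    show "\<forall>\<^sub>F n in sequentially. shift_defect (F n) (t *\<^sub>R e) \<le> ennreal (C * t)"
      using eventually_compose_filterlim[OF bound[OF that] r] J by eventually_elim auto
  qed auto
  then have "perimeter E \<le> ereal (2 * real DIM('a) * C)"
    using perimeter_le_of_shift_defect_le[OF assms(5,6) C] by blast
  then show ?thesis unfolding finite_perimeter_def by (auto intro: le_less_trans)
qed

section \<open>Lebesgue measurable sets and the limsup hypothesis\<close>

lemma lebesgue_set_AE_eq_borel: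
  fixes A :: "'a::euclidean_space set"
  assumes "A \<in> sets lebesgue"
  obtains B where "B \<in> sets borel" "AE x in lebesgue. (x \<in> A) = (x \<in> B)"
proof -
  obtain S N N' where A: "A = S \<union> N" "N \<subseteq> N'" "N' \<in> null_sets lborel" "S \<in> sets lborel"
    using sets_completionE[OF assms] by metis
  have "AE x in lebesgue. x \<notin> N'"
    by (rule AE_not_in) (rule null_sets_completionI[OF A(3)])
  then have "AE x in lebesgue. (x \<in> A) = (x \<in> S)"
    by eventually_elim (use A in auto)
  with A(4) show ?thesis using that by simp
qed

lemma divergence_borel_measurable:
  assumes "\<phi> \<in> test_fields"
  shows "divergence \<phi> \<in> borel_measurable (borel :: 'a::euclidean_space measure)"
proof -
  obtain D :: "'a \<Rightarrow> ('a \<Rightarrow>\<^sub>L 'a)" where D: "continuous_on UNIV D"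
      "\<And>x. (\<phi> has_derivative blinfun_apply (D x)) (at x)"
    using assms unfolding test_fields_def by blast
  have [measurable]: "(\<lambda>x. D x b \<bullet> b) \<in> borel_measurable borel" for b
    by (rule borel_measurable_continuous_onI[OF continuous_on_blinfun_matrix[OF D(1)]])
  have "divergence \<phi> = (\<lambda>x. \<Sum>b\<in>Basis. D x b \<bullet> b)"
    unfolding divergence_def fun_eq_iff frechet_derivative_at[OF D(2), symmetric] by simp
  then show ?thesis by simp
qed

lemma perimeter_cong_AE:
  fixes A B :: "'a::euclidean_space set"
  assumes "AE x in lebesgue. (x \<in> A) = (x \<in> B)" and [measurable]: "A \<in> sets lebesgue" "B \<in> sets lebesgue"
  shows "perimeter A = perimeter B"
  unfolding perimeter_def
proof (intro SUP_cong refl arg_cong[where f=ereal])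
  fix \<phi> :: "'a \<Rightarrow> 'a" assume "\<phi> \<in> test_fields"
  then have [measurable]: "divergence \<phi> \<in> borel_measurable lebesgue"
    by (intro measurable_completion) (simp add: divergence_borel_measurable)
  show "(LINT x:A|lebesgue. divergence \<phi> x) = (LINT x:B|lebesgue. divergence \<phi> x)"
    unfolding set_lebesgue_integral_def
    by (rule integral_cong_AE) (measurable, use assms(1) in \<open>eventually_elim, simp add: indicator_def\<close>)
qed

lemma nn_integral_lborel_indicator_diff_eq:
  fixes A B A' B' :: "'a::euclidean_space set"
  assumes [measurable]: "A \<in> sets lebesgue" "B \<in> sets lebesgue" "A' \<in> sets borel" "B' \<in> sets borel"
    and "emeasure lebesgue A < \<infinity>" "emeasure lebesgue B < \<infinity>"
    and "AE x in lebesgue. (x \<in> A) = (x \<in> A')" "AE x in lebesgue. (x \<in> B) = (x \<in> B')"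
  shows "(\<integral>\<^sup>+x. ennreal \<bar>indicator A' x - indicator B' x :: real\<bar> \<partial>lborel)
    = ennreal (LINT x|lebesgue. \<bar>indicator A x - indicator B x :: real\<bar>)"
proof -
  have [measurable]: "A' \<in> sets lebesgue" "B' \<in> sets lebesgue" by simp_all
  have "(\<integral>\<^sup>+x. ennreal \<bar>indicator A' x - indicator B' x :: real\<bar> \<partial>lborel)
      = (\<integral>\<^sup>+x. ennreal \<bar>indicator A' x - indicator B' x :: real\<bar> \<partial>lebesgue)"
    by (rule nn_integral_completion[symmetric]) measurable
  also have "\<dots> = (\<integral>\<^sup>+x. ennreal \<bar>indicator A x - indicator B x :: real\<bar> \<partial>lebesgue)"
    by (rule nn_integral_cong_AE) (use assms(7,8) in \<open>eventually_elim, simp add: indicator_def\<close>)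
  also have "\<dots> = ennreal (LINT x|lebesgue. \<bar>indicator A x - indicator B x :: real\<bar>)"
    using assms(5,6) by (intro nn_integral_eq_integral integrable_abs integrable_diff) auto
  finally show ?thesis .
qed

lemma eventually_le_of_limsup_divide_le:
  fixes f :: "nat \<Rightarrow> ennreal" and g :: "nat \<Rightarrow> real"
  assumes "limsup (\<lambda>n. enn2ereal (f n) / ereal (g n)) \<le> ereal M"
    and "eventually (\<lambda>n. 0 < g n) sequentially"
  shows "eventually (\<lambda>n. f n \<le> ennreal ((max M 0 + 1) * g n)) sequentially"
proof -
  have "limsup (\<lambda>n. enn2ereal (f n) / ereal (g n)) < ereal (max M 0 + 1)"
    using assms(1) by (rule le_less_trans) simp
  then have "eventually (\<lambda>n. enn2ereal (f n) / ereal (g n) < ereal (max M 0 + 1)) sequentially"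
    by (rule Limsup_lessD)
  with assms(2) show ?thesis
  proof eventually_elim
    case (elim n)
    then have "enn2ereal (f n) < ereal ((max M 0 + 1) * g n)"
      by (simp add: ereal_divide_less_iff)
    moreover have "enn2ereal (ennreal ((max M 0 + 1) * g n)) = ereal ((max M 0 + 1) * g n)"
      using elim by (intro enn2ereal_ennreal) simp
    ultimately show ?case
      by (simp add: less_eq_ennreal.rep_eq)
  qed
qed

theorem proposition2p6:
  fixes r :: "nat \<Rightarrow> real" and Es :: "nat \<Rightarrow> ('a::euclidean_space) set"
    and E :: "'a set" and s M :: real
  assumes "DIM('a) \<ge> 2" and "s \<ge> 1"
    and "\<And>n. r n > 0" and "r \<longlonglongrightarrow> 0"
    and "\<And>n. Es n \<in> sets lebesgue" and "\<And>n. emeasure lebesgue (Es n) < \<infinity>"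
    and "E \<in> sets lebesgue" and "emeasure lebesgue E < \<infinity>"
    and "(\<lambda>n. LINT x|lebesgue. \<bar>indicator (Es n) x - indicator E x :: real\<bar>) \<longlonglongrightarrow> 0"
    and "limsup (\<lambda>n. (enn2ereal (Jtilde s (r n) (Es n))) / ereal (sigma_s DIM('a) s (r n)))
           \<le> ereal M"
  shows "finite_perimeter E"
proof -
  have "\<forall>n. \<exists>B. B \<in> sets borel \<and> (AE x in lebesgue. (x \<in> Es n) = (x \<in> B))"
    using lebesgue_set_AE_eq_borel[OF assms(5)] by blast
  then obtain F where F: "\<And>n. F n \<in> sets borel" "\<And>n. AE x in lebesgue. (x \<in> Es n) = (x \<in> F n)"
    by metis
  obtain B where B: "B \<in> sets borel" "AE x in lebesgue. (x \<in> E) = (x \<in> B)"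
    using lebesgue_set_AE_eq_borel[OF assms(7)] by blast
  have "emeasure lborel B < \<infinity>"
    using emeasure_eq_AE[OF B(2)] B(1) assms(7,8) by simp
  moreover have "(\<lambda>n. \<integral>\<^sup>+x. ennreal \<bar>indicator (F n) x - indicator B x :: real\<bar> \<partial>lborel) \<longlonglongrightarrow> 0"
    using tendsto_ennrealI[OF assms(9)]
    by (simp add: nn_integral_lborel_indicator_diff_eq[OF assms(5,7) F(1) B(1) assms(6,8) F(2) B(2)])
  moreover have "max M 0 + 1 \<ge> 0" by simp
  moreover have "eventually (\<lambda>n. 0 < sigma_s DIM('a) s (r n)) sequentially"
    using order_tendstoD(2)[OF assms(4) zero_less_one]
    by eventually_elim (rule sigma_s_pos[OF assms(2,3)])
  with assms(10) have "eventually (\<lambda>n. Jtilde s (r n) (F n)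
      \<le> ennreal ((max M 0 + 1) * sigma_s DIM('a) s (r n))) sequentially"
    unfolding Jtilde_cong_AE[OF F(2)] by (rule eventually_le_of_limsup_divide_le)
  ultimately have "finite_perimeter B"
    by (rule finite_perimeter_of_Jtilde_le_borel[OF assms(2-4) F(1) B(1)])
  then show ?thesis
    unfolding finite_perimeter_def using perimeter_cong_AE[OF B(2) assms(7)] B(1) by simp
qed

end
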